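(* Let $P$ be a finite poset. Consider the following (nondeterministic) algorithm: set $P_0:=P$; at step $m$, if $P_m$ contains an $N$, choose some $N$ in $P_m$ and let $P_{m+1}$ be obtained from $P_m$ by adding one dummy vertex on the diagonal edge of that $N$; stop when $P_m$ is $N$-free. Then, whatever choices are made, the algorithm stops, and it stops on $S_N(S_N(P))$, which is the smallest $N$-free poset obtained as a barycentric subdivision of $\mathrm{Diag}(P)$. Hence the resulting poset and the number of steps do not depend on the choices of diagonal edges made at each step.
   Context: For a poset $P$, a covering pair is a pair $(x,y)$ with $x<y$ and no $z$ with $x<z<y$; we write $x\prec y$. $\mathrm{Diag}(P)$ is the directed graph on $P$ whose edges are the covering pairs. $\mathrm{Inc}(P)$ is the set of pairs of incomparable elements. Four elements $a,b,c,d$ of $P$ form an $N$ in $P$ if $b\prec c$, $a\prec c$, $b\prec d$ and $(a,d)\in\mathrm{Inc}(P)$; the pair $(b,c)$ is then the diagonal edge of this $N$. $P$ is $N$-free if it contains no $N$. $N_{diag}(P)$ denotes the set of diagonal edges of all $N$'s in $P$. Adding a dummy vertex $u$ on a covering pair $(x,y)$ means adding a new element $u$ with $x\prec u\prec y$ and taking the induced (transitive) order. A barycentric subdivision of $\mathrm{Diag}(P)$ consists of adding finitely many (possibly zero) new vertices on each edge of $\mathrm{Diag}(P)$. $S_N(P)$ is the poset obtained from $P$ by adding one dummy vertex on each edge of $N_{diag}(P)$. *)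

theory Defs
  imports Main
begin

text \<open>A poset is represented by its carrier set together with its order relation
  (x \<le> y), only the restriction to the carrier being relevant.\<close>
type_synonym 'a poset = "'a set \<times> ('a \<Rightarrow> 'a \<Rightarrow> bool)"

fun is_poset :: "'a poset \<Rightarrow> bool" where
  "is_poset (A, le) =
     ((\<forall>x\<in>A. le x x) \<and>
      (\<forall>x\<in>A. \<forall>y\<in>A. le x y \<and> le y x \<longrightarrow> x = y) \<and>
      (\<forall>x\<in>A. \<forall>y\<in>A. \<forall>z\<in>A. le x y \<and> le y z \<longrightarrow> le x z))"

fun plt :: "'a poset \<Rightarrow> 'a \<Rightarrow> 'a \<Rightarrow> bool" where
  "plt (A, le) x y = (x \<in> A \<and> y \<in> A \<and> le x y \<and> x \<noteq> y)"

fun covers :: "'a poset \<Rightarrow> 'a \<Rightarrow> 'a \<Rightarrow> bool" where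
  "covers (A, le) x y =
     (plt (A, le) x y \<and> \<not> (\<exists>z\<in>A. plt (A, le) x z \<and> plt (A, le) z y))"

fun incomp :: "'a poset \<Rightarrow> 'a \<Rightarrow> 'a \<Rightarrow> bool" where
  "incomp (A, le) x y = (x \<in> A \<and> y \<in> A \<and> \<not> le x y \<and> \<not> le y x)"

definition is_N :: "'a poset \<Rightarrow> 'a \<Rightarrow> 'a \<Rightarrow> 'a \<Rightarrow> 'a \<Rightarrow> bool" where
  "is_N P a b c d =
     (covers P b c \<and> covers P a c \<and> covers P b d \<and> incomp P a d)"

definition N_free :: "'a poset \<Rightarrow> bool" where
  "N_free P = (\<not> (\<exists>a b c d. is_N P a b c d))"

definition N_diag :: "'a poset \<Rightarrow> ('a \<times> 'a) set" where
  "N_diag P = {(b, c). \<exists>a d. is_N P a b c d}"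

fun add_dummy :: "'a poset \<Rightarrow> 'a \<Rightarrow> 'a \<Rightarrow> 'a \<Rightarrow> 'a poset" where
  "add_dummy (A, le) x y u =
     (insert u A,
      (\<lambda>p q. (p \<in> A \<and> q \<in> A \<and> le p q) \<or> (p = x \<and> q = u) \<or> (p = u \<and> q = y))\<^sup>*\<^sup>*)"

definition alg_step :: "'a poset \<Rightarrow> 'a poset \<Rightarrow> bool" where
  "alg_step P Q =
     (\<exists>a b c d u. is_N P a b c d \<and> u \<notin> fst P \<and> Q = add_dummy P b c u)"

definition complete_run :: "'a poset \<Rightarrow> 'a poset list \<Rightarrow> bool" where
  "complete_run P Ps =
     (Ps \<noteq> [] \<and> hd Ps = P \<and>
      (\<forall>i. Suc i < length Ps \<longrightarrow> alg_step (Ps ! i) (Ps ! Suc i)) \<and>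
      N_free (last Ps))"

text \<open>Barycentric subdivision of Diag(P) with k(x,y) new vertices on the edge (x,y):
  new vertices Inr (x,y,i), 1 \<le> i \<le> k(x,y), forming the chain
  x \<prec> (x,y,1) \<prec> ... \<prec> (x,y,k(x,y)) \<prec> y; the order is the induced one.\<close>
fun subdiv_base :: "'a poset \<Rightarrow> ('a \<times> 'a \<Rightarrow> nat) \<Rightarrow>
    'a + ('a \<times> 'a \<times> nat) \<Rightarrow> 'a + ('a \<times> 'a \<times> nat) \<Rightarrow> bool" where
  "subdiv_base (A, le) k p q =
     ((\<exists>x y. p = Inl x \<and> q = Inl y \<and> x \<in> A \<and> y \<in> A \<and> le x y) \<or>
      (\<exists>x y. covers (A, le) x y \<and> 1 \<le> k (x, y) \<and>
         ((p = Inl x \<and> q = Inr (x, y, 1)) \<or>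
          (\<exists>i. 1 \<le> i \<and> i < k (x, y) \<and> p = Inr (x, y, i) \<and> q = Inr (x, y, Suc i)) \<or>
          (p = Inr (x, y, k (x, y)) \<and> q = Inl y))))"

fun subdiv :: "'a poset \<Rightarrow> ('a \<times> 'a \<Rightarrow> nat) \<Rightarrow> ('a + ('a \<times> 'a \<times> nat)) poset" where
  "subdiv (A, le) k =
     (Inl ` A \<union> {Inr (x, y, i) | x y i. covers (A, le) x y \<and> 1 \<le> i \<and> i \<le> k (x, y)},
      (subdiv_base (A, le) k)\<^sup>*\<^sup>*)"

definition SN :: "'a poset \<Rightarrow> ('a + ('a \<times> 'a \<times> nat)) poset" where
  "SN P = subdiv P (\<lambda>e. if e \<in> N_diag P then 1 else 0)"

definition poset_iso :: "'a poset \<Rightarrow> 'b poset \<Rightarrow> bool" where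
  "poset_iso P Q =
     (\<exists>f. bij_betw f (fst P) (fst Q) \<and>
          (\<forall>x\<in>fst P. \<forall>y\<in>fst P. snd P x y \<longleftrightarrow> snd Q (f x) (f y)))"

end

theory Submission
  imports Defs
begin

(* For a set K of covering pairs of P write P_K (Sub1 K below) for P with one dummy vertex on
   each edge of K.  An N of P_K has its diagonal on an edge (b, c) of P outside K, and each of
   its two legs is either a covering pair of P or a subdivided edge; N_edges P K collects these
   diagonals, so P_K is N-free iff N_edges P K is contained in K.  Since N_edges P {} = N_diag P,
   S_N(P) = P_K1 for K1 = N_diag P, and S_N(S_N(P)) is isomorphic to P_K0 for K0 = N_edges P K1.

   The combinatorial heart is that K0 is already closed, N_edges P K0 contained in K0.  As
   N_edges P is monotone, K0 is then the least closed set, i.e. P_K0 is the least N-free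
   barycentric subdivision of Diag(P).  A step of the algorithm turns a copy of P_K into a copy
   of P_(K + e) for some e in N_edges P K - K, which stays inside K0; so every run stops after
   at most |K0| steps, and it can only stop when K is closed, that is, when K = K0. *)

section \<open>N-diagonals after subdividing edges\<close>

declare covers.simps [simp del]

lemma covers_iff:
  "covers (A, le) x y \<longleftrightarrow> x \<in> A \<and> y \<in> A \<and> le x y \<and> x \<noteq> y \<and>
     \<not> (\<exists>z\<in>A. le x z \<and> x \<noteq> z \<and> le z y \<and> z \<noteq> y)"
  by (auto simp: covers.simps)

text \<open>The pairs in N_edges P K - K are the N-diagonals of P_K (lemma N_diag_subdiv).  A leg (a, c)
  or (b, d) lying in K is subdivided, and its dummy vertex next to c, resp. b, is an end of such
  an N which is incomparable with the other end for free.\<close>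

definition N_edges :: "'a poset \<Rightarrow> ('a \<times> 'a) set \<Rightarrow> ('a \<times> 'a) set" where
  "N_edges P K = {(b, c). covers P b c \<and> (\<exists>a d. covers P a c \<and> covers P b d \<and> a \<noteq> b \<and> d \<noteq> c \<and>
     (incomp P a d \<or> (a, c) \<in> K \<or> (b, d) \<in> K))}"

lemma N_edgesI:
  assumes "covers P b c" "covers P a c" "covers P b d" "a \<noteq> b" "d \<noteq> c"
    and "incomp P a d \<or> (a, c) \<in> K \<or> (b, d) \<in> K"
  shows "(b, c) \<in> N_edges P K"
  using assms unfolding N_edges_def by blast

lemma N_edges_mono: "K \<subseteq> K' \<Longrightarrow> N_edges P K \<subseteq> N_edges P K'"
  unfolding N_edges_def by blast

lemma N_edges_empty: "N_edges (A, le) {} = N_diag (A, le)"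
  unfolding N_edges_def N_diag_def is_N_def by (auto simp: covers_iff)

locale finite_poset =
  fixes A :: "'a set" and le :: "'a \<Rightarrow> 'a \<Rightarrow> bool"
  assumes refl: "x \<in> A \<Longrightarrow> le x x"
    and antisym: "x \<in> A \<Longrightarrow> y \<in> A \<Longrightarrow> le x y \<Longrightarrow> le y x \<Longrightarrow> x = y"
    and trans: "x \<in> A \<Longrightarrow> y \<in> A \<Longrightarrow> z \<in> A \<Longrightarrow> le x y \<Longrightarrow> le y z \<Longrightarrow> le x z"
    and finite_carrier: "finite A"
begin

abbreviation cov :: "'a \<Rightarrow> 'a \<Rightarrow> bool" where "cov \<equiv> covers (A, le)"
abbreviation inc :: "'a \<Rightarrow> 'a \<Rightarrow> bool" where "inc \<equiv> incomp (A, le)"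
abbreviation E :: "('a \<times> 'a) set \<Rightarrow> ('a \<times> 'a) set" where "E \<equiv> N_edges (A, le)"

lemma covD: "cov x y \<Longrightarrow> x \<in> A \<and> y \<in> A \<and> le x y \<and> x \<noteq> y"
  by (simp add: covers_iff)

lemma cov_betweenD: "cov x y \<Longrightarrow> z \<in> A \<Longrightarrow> le x z \<Longrightarrow> le z y \<Longrightarrow> z = x \<or> z = y"
  by (auto simp: covers_iff)

lemma exists_cover_below:
  assumes "x \<in> A" "z \<in> A" "le x z" "x \<noteq> z"
  shows "\<exists>d. cov x d \<and> le d z"
proof -
  let ?B = "{v \<in> A. le x v \<and> x \<noteq> v \<and> le v z}"
  let ?lt = "\<lambda>v w. le v w \<and> v \<noteq> w"
  have "asymp_on ?B ?lt"
    by (auto intro!: asymp_onI dest: antisym)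
  moreover have "transp_on ?B ?lt"
    by (auto intro!: transp_onI dest: antisym intro: trans)
  moreover have "finite ?B" "?B \<noteq> {}"
    using finite_carrier assms refl by auto
  ultimately obtain d where d: "d \<in> ?B" and min: "\<forall>v\<in>?B. v \<noteq> d \<longrightarrow> \<not> ?lt v d"
    using Finite_Set.bex_min_element by blast
  have "\<not> (le x w \<and> x \<noteq> w \<and> le w d \<and> w \<noteq> d)" if "w \<in> A" for w
    using min d that assms(2) trans[of w d z] by auto
  then have "cov x d"
    using d assms by (auto simp: covers_iff)
  then show ?thesis using d by blast
qed

lemma N_legs_not_le:
  assumes "cov b c" "cov a c" "cov b d" "d \<noteq> c"
  shows "\<not> le d a"
proof
  assume "le d a"
  then have "le d c" using assms covD trans by blast
  then show False using assms cov_betweenD[of b c d] covD by blast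
qed

lemma N_diagI: "cov b c \<Longrightarrow> cov a c \<Longrightarrow> cov b d \<Longrightarrow> inc a d \<Longrightarrow> (b, c) \<in> N_diag (A, le)"
  unfolding N_diag_def is_N_def by blast

lemma below_other_upper_cover:
  assumes ac: "cov a c" and bc: "cov b c" and ad: "cov a d" and "a \<noteq> b" "d \<noteq> c"
    and "(a, c) \<notin> N_diag (A, le)"
  shows "le b d \<and> b \<noteq> d"
proof -
  have "\<not> inc b d" using N_diagI[OF ac bc ad] assms by blast
  moreover have "\<not> le d b" using N_legs_not_le[OF ac bc ad] assms by blast
  moreover have "b \<noteq> d" using cov_betweenD[OF ac, of b] assms covD by blast
  ultimately show ?thesis using bc ad covD by auto
qed

lemma upper_cover_shared:
  assumes ac: "cov a c" and bc: "cov b c" and ad: "cov a d" and "a \<noteq> b" "d \<noteq> c"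
    and "(a, c) \<notin> N_diag (A, le)" "(b, c) \<notin> N_diag (A, le)"
  shows "cov b d"
proof -
  have mem: "a \<in> A" "b \<in> A" "c \<in> A" "d \<in> A" using assms covD by blast+
  have "le b d" "b \<noteq> d" using below_other_upper_cover[OF ac bc ad] assms by blast+
  moreover have "\<not> (le b z \<and> b \<noteq> z \<and> le z d \<and> z \<noteq> d)" if z: "z \<in> A" for z
  proof
    assume bzd: "le b z \<and> b \<noteq> z \<and> le z d \<and> z \<noteq> d"
    then obtain d' where bd': "cov b d'" and "le d' z"
      using exists_cover_below[OF mem(2) z] by blast
    then have "le d' d" using bzd z mem covD trans by blast
    have "d' \<noteq> c"
    proof
      assume "d' = c"
      then have "le c d" using \<open>le d' d\<close> by simp
      then show False using cov_betweenD[OF ad, of c] assms covD by blast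
    qed
    have "\<not> inc a d'" using N_diagI[OF bc ac bd'] assms by blast
    moreover have "\<not> le d' a" using N_legs_not_le[OF bc ac bd' \<open>d' \<noteq> c\<close>] .
    ultimately have "le a d'" using mem covD[OF bd'] by auto
    then have "le a z" using \<open>le d' z\<close> mem z covD[OF bd'] trans by blast
    moreover have "a \<noteq> z" using \<open>\<not> le d' a\<close> \<open>le d' z\<close> by blast
    ultimately show False using cov_betweenD[OF ad z] bzd by blast
  qed
  ultimately show ?thesis using mem by (auto simp: covers_iff)
qed

lemma N_diag_shared:
  assumes ac: "cov a c" and bc: "cov b c" and ad: "cov a d" and bd: "cov b d"
    and "a \<noteq> b" "d \<noteq> c"
    and "(a, c) \<notin> N_diag (A, le)" "(a, d) \<in> N_diag (A, le)"
  shows "(b, d) \<in> N_diag (A, le)"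
proof -
  obtain x y where xd: "cov x d" and ay: "cov a y" and xy: "inc x y"
    using assms unfolding N_diag_def is_N_def by blast
  have mem: "a \<in> A" "b \<in> A" "c \<in> A" "d \<in> A" "x \<in> A" "y \<in> A"
    using assms xd ay covD by blast+
  show ?thesis
  proof (cases "y = c")
    case True
    then show ?thesis using N_diagI[OF bd xd bc] xy by simp
  next
    case False
    then have "le b y" "b \<noteq> y" using below_other_upper_cover[OF ac bc ay] assms by blast+
    then obtain d' where bd': "cov b d'" and "le d' y"
      using exists_cover_below[of b y] mem by blast
    have "d' \<in> A" using bd' covD by blast
    have "d' \<noteq> d"
    proof
      assume "d' = d"
      then have "le d y" using \<open>le d' y\<close> by simp
      moreover have "d \<noteq> y" using xy xd covD by auto
      ultimately show False using cov_betweenD[OF ay, of d] ad covD by blast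
    qed
    have "\<not> le x d'"
    proof
      assume "le x d'"
      then have "le x y" using trans[OF mem(5) \<open>d' \<in> A\<close> mem(6)] \<open>le d' y\<close> by blast
      then show False using xy by simp
    qed
    moreover have "\<not> le d' x"
    proof
      assume "le d' x"
      then have "le d' d" using trans[OF \<open>d' \<in> A\<close> mem(5) mem(4)] xd covD by blast
      then show False using cov_betweenD[OF bd \<open>d' \<in> A\<close>] bd' \<open>d' \<noteq> d\<close> covD by blast
    qed
    ultimately have "inc x d'" using mem \<open>d' \<in> A\<close> by simp
    then show ?thesis using N_diagI[OF bd xd bd'] by blast
  qed
qed

lemma dual: "finite_poset A (\<lambda>x y. le y x)"
  by unfold_locales (auto intro: refl antisym trans finite_carrier)

lemma covers_dual: "covers (A, \<lambda>x y. le y x) x y \<longleftrightarrow> cov y x"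
  by (auto simp: covers_iff)

lemma N_edges_dual: "(x, y) \<in> N_edges (A, \<lambda>x y. le y x) (prod.swap ` K) \<longleftrightarrow> (y, x) \<in> E K"
  unfolding N_edges_def covers_dual by simp blast

lemma N_diag_dual: "N_diag (A, \<lambda>x y. le y x) = prod.swap ` N_diag (A, le)"
  using N_edges_dual[of _ _ "{}"] by (simp add: N_edges_empty set_eq_iff split_paired_All)

abbreviation N_closure :: "('a \<times> 'a) set" where
  "N_closure \<equiv> E (N_diag (A, le))"

lemma N_diag_subset_N_closure: "N_diag (A, le) \<subseteq> N_closure"
  by (metis N_edges_empty N_edges_mono empty_subsetI)

lemma N_closure_left_leg:
  assumes bc: "cov b c" and ac: "cov a c" and bd: "cov b d" and "a \<noteq> b" "d \<noteq> c"
    and "(a, c) \<in> N_closure"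
  shows "(b, c) \<in> N_closure"
proof -
  obtain a' d' where a'c: "cov a' c" and ad': "cov a d'" and "a' \<noteq> a" "d' \<noteq> c"
    and alt: "inc a' d' \<or> (a', c) \<in> N_diag (A, le) \<or> (a, d') \<in> N_diag (A, le)"
    using assms unfolding N_edges_def by blast
  have diag_bc: "(b, c) \<in> N_closure" if "(b, c) \<in> N_diag (A, le)"
    using that N_diag_subset_N_closure by blast
  have diag_ac: "(b, c) \<in> N_closure" if "(a, c) \<in> N_diag (A, le)"
    using N_edgesI[OF bc ac bd] assms that by blast
  consider "inc a' d'" | "(a', c) \<in> N_diag (A, le)" | "(a, d') \<in> N_diag (A, le)"
    using alt by blast
  then show ?thesis
  proof cases
    case 1
    then show ?thesis using diag_ac N_diagI[OF ac a'c ad'] by blast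
  next
    case 2
    then show ?thesis using diag_bc N_edgesI[OF bc a'c bd _ \<open>d \<noteq> c\<close>] by (cases "a' = b") auto
  next
    case 3
    show ?thesis
    proof (cases "(a, c) \<in> N_diag (A, le) \<or> (b, c) \<in> N_diag (A, le)")
      case True
      then show ?thesis using diag_ac diag_bc by blast
    next
      case False
      then have bd': "cov b d'" using upper_cover_shared[OF ac bc ad'] assms \<open>d' \<noteq> c\<close> by blast
      then have "(b, d') \<in> N_diag (A, le)"
        using N_diag_shared[OF ac bc ad' bd'] assms \<open>d' \<noteq> c\<close> 3 False by blast
      then show ?thesis using N_edgesI[OF bc ac bd'] assms \<open>d' \<noteq> c\<close> by blast
    qed
  qed
qed

text \<open>Reversing the order exchanges the two legs of an N.\<close>

lemma N_closure_right_leg: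
  assumes "cov b c" "cov a c" "cov b d" "a \<noteq> b" "d \<noteq> c" "(b, d) \<in> N_closure"
  shows "(b, c) \<in> N_closure"
  using finite_poset.N_closure_left_leg[OF dual, of c b d a] assms
  unfolding covers_dual N_diag_dual N_edges_dual by simp

theorem N_edges_N_closure: "E N_closure \<subseteq> N_closure"
proof
  fix e assume "e \<in> E N_closure"
  then obtain b c a d where e: "e = (b, c)" and bc: "cov b c" and ac: "cov a c" and bd: "cov b d"
    and "a \<noteq> b" "d \<noteq> c" and alt: "inc a d \<or> (a, c) \<in> N_closure \<or> (b, d) \<in> N_closure"
    unfolding N_edges_def by blast
  have "(b, c) \<in> N_closure" if "inc a d"
    using N_edgesI[OF bc ac bd] \<open>a \<noteq> b\<close> \<open>d \<noteq> c\<close> that by blast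
  then show "e \<in> N_closure"
    using alt e N_closure_left_leg[OF bc ac bd] N_closure_right_leg[OF bc ac bd] \<open>a \<noteq> b\<close> \<open>d \<noteq> c\<close>
    by blast
qed

lemma N_closure_least:
  assumes "E K \<subseteq> K"
  shows "N_closure \<subseteq> K"
proof -
  have "N_diag (A, le) \<subseteq> K"
    using N_edges_mono[of "{}" K "(A, le)"] assms by (simp add: N_edges_empty)
  then show ?thesis using N_edges_mono assms by blast
qed

lemma N_edges_subset_N_closure: "K \<subseteq> N_closure \<Longrightarrow> E K \<subseteq> N_closure"
  using N_edges_mono N_edges_N_closure by blast

lemma N_edges_subset_covers: "E K \<subseteq> {(x, y). cov x y}"
  unfolding N_edges_def by blast

lemma finite_N_closure: "finite N_closure"
proof -
  have "N_closure \<subseteq> A \<times> A" using N_edges_subset_covers covD by blast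
  then show ?thesis using finite_carrier finite_subset by blast
qed

end

section \<open>The order of a subdivision\<close>

type_synonym 'a subdiv_vertex = "'a + 'a \<times> 'a \<times> nat"

fun lower_end :: "'a subdiv_vertex \<Rightarrow> 'a" where
  "lower_end (Inl x) = x"
| "lower_end (Inr (x, y, i)) = x"

fun upper_end :: "'a subdiv_vertex \<Rightarrow> 'a" where
  "upper_end (Inl x) = x"
| "upper_end (Inr (x, y, i)) = y"

fun same_edge_le :: "'a subdiv_vertex \<Rightarrow> 'a subdiv_vertex \<Rightarrow> bool" where
  "same_edge_le (Inr (x, y, i)) (Inr (x', y', j)) \<longleftrightarrow> x = x' \<and> y = y' \<and> i \<le> j"
| "same_edge_le _ _ \<longleftrightarrow> False"

text \<open>Closed form of the order of \<^const>\<open>subdiv\<close>: the vertex Inr (x, y, i) lies strictly between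
  x and y, so a comparability either stays on one subdivided edge or passes through P from the
  upper end of one vertex to the lower end of the other.\<close>

definition subdiv_le :: "('a \<Rightarrow> 'a \<Rightarrow> bool) \<Rightarrow> 'a subdiv_vertex \<Rightarrow> 'a subdiv_vertex \<Rightarrow> bool"
  where "subdiv_le le p q \<longleftrightarrow> same_edge_le p q \<or> le (upper_end p) (lower_end q)"

lemma same_edge_le_ends:
  "same_edge_le p q \<Longrightarrow> lower_end p = lower_end q \<and> upper_end p = upper_end q"
  by (induction p q rule: same_edge_le.induct) auto

lemma same_edge_le_trans: "same_edge_le p q \<Longrightarrow> same_edge_le q r \<Longrightarrow> same_edge_le p r"
  by (induction p q rule: same_edge_le.induct) (auto elim: same_edge_le.elims)

declare subdiv.simps [simp del]

context finite_poset
begin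

abbreviation Sub :: "('a \<times> 'a \<Rightarrow> nat) \<Rightarrow> 'a subdiv_vertex poset" where
  "Sub k \<equiv> subdiv (A, le) k"

lemma Inl_in_subdiv [simp]: "Inl x \<in> fst (Sub k) \<longleftrightarrow> x \<in> A"
  by (auto simp: subdiv.simps)

lemma Inr_in_subdiv [simp]: "Inr (x, y, i) \<in> fst (Sub k) \<longleftrightarrow> cov x y \<and> 1 \<le> i \<and> i \<le> k (x, y)"
  by (auto simp: subdiv.simps)

lemma snd_subdiv: "snd (Sub k) = (subdiv_base (A, le) k)\<^sup>*\<^sup>*"
  by (simp add: subdiv.simps)

lemma subdiv_cases [consumes 1, case_names Inl Inr]:
  assumes "p \<in> fst (Sub k)"
  obtains x where "p = Inl x" "x \<in> A"
  | x y i where "p = Inr (x, y, i)" "cov x y" "1 \<le> i" "i \<le> k (x, y)"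
  using assms by (cases p) auto

lemma subdiv_ends:
  assumes "p \<in> fst (Sub k)"
  shows "lower_end p \<in> A \<and> upper_end p \<in> A \<and> le (lower_end p) (upper_end p)"
  using assms by (cases rule: subdiv_cases) (auto simp: refl dest: covD)

lemma lower_end_eq_upper_end_iff:
  assumes "p \<in> fst (Sub k)"
  shows "lower_end p = upper_end p \<longleftrightarrow> p = Inl (lower_end p)"
  using assms by (cases rule: subdiv_cases) (auto dest: covD)

lemma subdiv_le_refl: "p \<in> fst (Sub k) \<Longrightarrow> subdiv_le le p p"
  by (cases rule: subdiv_cases) (auto simp: subdiv_le_def refl)

lemma subdiv_le_trans:
  assumes "p \<in> fst (Sub k)" "q \<in> fst (Sub k)" "r \<in> fst (Sub k)"
    and "subdiv_le le p q" "subdiv_le le q r"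
  shows "subdiv_le le p r"
  using assms subdiv_ends[of p k] subdiv_ends[of q k] subdiv_ends[of r k]
    same_edge_le_ends[of p q] same_edge_le_ends[of q r] same_edge_le_trans[of p q r]
    trans[of "upper_end p" "lower_end q" "upper_end q"]
    trans[of "upper_end p" "upper_end q" "lower_end r"]
  unfolding subdiv_le_def by metis

lemma subdiv_le_ends:
  assumes "p \<in> fst (Sub k)" "q \<in> fst (Sub k)" "subdiv_le le p q"
  shows "le (lower_end p) (lower_end q) \<and> le (upper_end p) (upper_end q)"
  using assms subdiv_ends[of p k] subdiv_ends[of q k] same_edge_le_ends[of p q]
    trans[of "lower_end p" "upper_end p" "lower_end q"]
    trans[of "upper_end p" "lower_end q" "upper_end q"]
  unfolding subdiv_le_def by (metis refl)

lemma subdiv_le_antisym: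
  assumes p: "p \<in> fst (Sub k)" and q: "q \<in> fst (Sub k)"
    and pq: "subdiv_le le p q" and qp: "subdiv_le le q p"
  shows "p = q"
proof -
  have "lower_end p = lower_end q" "upper_end p = upper_end q"
    using subdiv_le_ends[OF p q pq] subdiv_le_ends[OF q p qp] subdiv_ends[OF p] subdiv_ends[OF q]
    by (auto intro: antisym)
  with p q pq qp show ?thesis
    using lower_end_eq_upper_end_iff[OF p] lower_end_eq_upper_end_iff[OF q]
    by (cases rule: subdiv_cases; cases rule: subdiv_cases[OF q])
      (auto simp: subdiv_le_def dest: covD antisym)
qed

lemma subdiv_base_cases [consumes 1, case_names Inl_Inl first middle last]:
  assumes "subdiv_base (A, le) k p q"
  obtains x y where "p = Inl x" "q = Inl y" "x \<in> A" "y \<in> A" "le x y"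
  | x y where "cov x y" "1 \<le> k (x, y)" "p = Inl x" "q = Inr (x, y, 1)"
  | x y i where "cov x y" "1 \<le> i" "i < k (x, y)" "p = Inr (x, y, i)" "q = Inr (x, y, Suc i)"
  | x y where "cov x y" "1 \<le> k (x, y)" "p = Inr (x, y, k (x, y))" "q = Inl y"
  using assms by (simp only: subdiv_base.simps) blast

lemma subdiv_base_subdiv_le:
  assumes "subdiv_base (A, le) k p q"
  shows "p \<in> fst (Sub k) \<and> q \<in> fst (Sub k) \<and> subdiv_le le p q"
  using assms by (cases rule: subdiv_base_cases) (auto simp: subdiv_le_def refl dest: covD)

lemma rtranclp_subdiv_chain:
  assumes "cov x y" "1 \<le> i" "i \<le> j" "j \<le> k (x, y)"
  shows "(subdiv_base (A, le) k)\<^sup>*\<^sup>* (Inr (x, y, i)) (Inr (x, y, j))"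
  using assms(3,4)
proof (induction j rule: dec_induct)
  case (step j)
  then have "subdiv_base (A, le) k (Inr (x, y, j)) (Inr (x, y, Suc j))"
    using assms by auto
  then show ?case using step by (simp add: rtranclp.rtrancl_into_rtrancl)
qed simp

lemma rtranclp_subdiv_lower_end:
  assumes "p \<in> fst (Sub k)"
  shows "(subdiv_base (A, le) k)\<^sup>*\<^sup>* (Inl (lower_end p)) p"
  using assms
proof (cases rule: subdiv_cases)
  case (Inr x y i)
  then have "subdiv_base (A, le) k (Inl x) (Inr (x, y, 1))" by auto
  moreover have "(subdiv_base (A, le) k)\<^sup>*\<^sup>* (Inr (x, y, 1)) (Inr (x, y, i))"
    using Inr rtranclp_subdiv_chain by simp
  ultimately show ?thesis
    using Inr by (metis converse_rtranclp_into_rtranclp lower_end.simps(2))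
qed simp

lemma rtranclp_subdiv_upper_end:
  assumes "p \<in> fst (Sub k)"
  shows "(subdiv_base (A, le) k)\<^sup>*\<^sup>* p (Inl (upper_end p))"
  using assms
proof (cases rule: subdiv_cases)
  case (Inr x y i)
  then have "subdiv_base (A, le) k (Inr (x, y, k (x, y))) (Inl y)" by auto
  moreover have "(subdiv_base (A, le) k)\<^sup>*\<^sup>* (Inr (x, y, i)) (Inr (x, y, k (x, y)))"
    using Inr rtranclp_subdiv_chain by simp
  ultimately show ?thesis
    using Inr by (metis rtranclp.rtrancl_into_rtrancl upper_end.simps(2))
qed simp

lemma subdiv_order:
  assumes "p \<in> fst (Sub k)" "q \<in> fst (Sub k)"
  shows "snd (Sub k) p q \<longleftrightarrow> subdiv_le le p q"
proof
  assume "snd (Sub k) p q"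
  then have "(subdiv_base (A, le) k)\<^sup>*\<^sup>* p q" by (simp add: snd_subdiv)
  then show "subdiv_le le p q"
  proof (induction rule: rtranclp_induct)
    case (step q r)
    then show ?case
      using subdiv_le_trans[OF assms(1)] subdiv_base_subdiv_le[OF step(2)] by blast
  qed (rule subdiv_le_refl[OF assms(1)])
next
  assume pq: "subdiv_le le p q"
  show "snd (Sub k) p q"
  proof (cases "same_edge_le p q")
    case True
    then obtain x y i j where "p = Inr (x, y, i)" "q = Inr (x, y, j)" "i \<le> j"
      by (auto elim: same_edge_le.elims)
    then show ?thesis using assms by (simp add: snd_subdiv rtranclp_subdiv_chain)
  next
    case False
    then have "le (upper_end p) (lower_end q)" using pq by (simp add: subdiv_le_def)
    then have "subdiv_base (A, le) k (Inl (upper_end p)) (Inl (lower_end q))"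
      using subdiv_ends assms by auto
    then show ?thesis
      using rtranclp_subdiv_upper_end[OF assms(1)] rtranclp_subdiv_lower_end[OF assms(2)]
      unfolding snd_subdiv by (meson r_into_rtranclp rtranclp_trans)
  qed
qed

lemma subdiv_eq: "Sub k = (fst (Sub k), (subdiv_base (A, le) k)\<^sup>*\<^sup>*)"
  by (simp add: subdiv.simps)

lemma finite_subdiv_carrier: "finite (fst (Sub k))"
proof -
  have "fst (Sub k) \<subseteq> Inl ` A \<union> (\<lambda>(e, i). Inr (fst e, snd e, i)) ` (SIGMA e:A \<times> A. {..k e})"
  proof
    fix p assume "p \<in> fst (Sub k)"
    then show "p \<in> Inl ` A \<union> (\<lambda>(e, i). Inr (fst e, snd e, i)) ` (SIGMA e:A \<times> A. {..k e})"
      by (cases rule: subdiv_cases) (force dest: covD)+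
  qed
  then show ?thesis using finite_carrier by (auto intro: finite_subset)
qed

lemma finite_poset_subdiv: "finite_poset (fst (Sub k)) (snd (Sub k))"
proof
  show "finite (fst (Sub k))" by (rule finite_subdiv_carrier)
qed (use subdiv_order subdiv_le_refl subdiv_le_antisym subdiv_le_trans in metis)+

end

section \<open>Covering pairs and N's of a subdivision\<close>

lemma covers_rtranclpD:
  assumes "\<And>x y. R x y \<Longrightarrow> y \<in> C" and "covers (C, R\<^sup>*\<^sup>*) p q"
  shows "R p q"
proof -
  have "R\<^sup>*\<^sup>* p q" using assms(2) by (simp add: covers_iff)
  then show ?thesis using assms(2)
  proof (induction rule: converse_rtranclp_induct)
    case (step y z)
    then show ?case using assms(1)[OF step(1)] by (auto simp: covers_iff)
  qed (simp add: covers_iff)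
qed

context finite_poset
begin

lemma covers_subdiv_iff:
  "covers (Sub k) p q \<longleftrightarrow> p \<in> fst (Sub k) \<and> q \<in> fst (Sub k) \<and> subdiv_le le p q \<and> p \<noteq> q \<and>
     \<not> (\<exists>z\<in>fst (Sub k). subdiv_le le p z \<and> p \<noteq> z \<and> subdiv_le le z q \<and> z \<noteq> q)"
  by (subst prod.collapse[symmetric]) (auto simp: covers_iff subdiv_order simp del: prod.collapse)

lemma covers_subdivD: "covers (Sub k) p q \<Longrightarrow> subdiv_base (A, le) k p q"
  using covers_rtranclpD[of "subdiv_base (A, le) k" "fst (Sub k)"] subdiv_base_subdiv_le subdiv_eq
  by metis

lemma covers_subdiv_Inl_Inl: "covers (Sub k) (Inl x) (Inl y) \<longleftrightarrow> cov x y \<and> k (x, y) = 0"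
proof
  assume xy: "covers (Sub k) (Inl x) (Inl y)"
  then have "x \<in> A" "y \<in> A" "le x y" "x \<noteq> y"
    by (auto simp: covers_subdiv_iff subdiv_le_def)
  moreover have "\<not> (le x z \<and> x \<noteq> z \<and> le z y \<and> z \<noteq> y)" if "z \<in> A" for z
    using xy that unfolding covers_subdiv_iff subdiv_le_def by force
  moreover have "k (x, y) = 0"
  proof (rule ccontr)
    assume "k (x, y) \<noteq> 0"
    then have "Inr (x, y, 1) \<in> fst (Sub k)" using calculation by (auto simp: covers_iff)
    moreover have "subdiv_le le (Inl x) (Inr (x, y, 1))" "subdiv_le le (Inr (x, y, 1)) (Inl y)"
      using \<open>x \<in> A\<close> \<open>y \<in> A\<close> by (simp_all add: subdiv_le_def refl)
    ultimately show False using xy unfolding covers_subdiv_iff by blast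
  qed
  ultimately show "cov x y \<and> k (x, y) = 0" by (auto simp: covers_iff)
next
  assume xy: "cov x y \<and> k (x, y) = 0"
  have "\<not> (subdiv_le le (Inl x) z \<and> Inl x \<noteq> z \<and> subdiv_le le z (Inl y) \<and> z \<noteq> Inl y)"
    if "z \<in> fst (Sub k)" for z
    using that
  proof (cases rule: subdiv_cases)
    case (Inr a b i)
    then show ?thesis
      using xy cov_betweenD[of x y a] cov_betweenD[of x y b] covD[of a b] covD[of x y] trans[of a b y]
        antisym[of a b]
      by (auto simp: subdiv_le_def)
  qed (use xy cov_betweenD[of x y] in \<open>auto simp: subdiv_le_def\<close>)
  then show "covers (Sub k) (Inl x) (Inl y)"
    using xy covD[of x y] by (auto simp: covers_subdiv_iff subdiv_le_def)
qed

lemma covers_subdiv_first: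
  assumes "cov x y" "1 \<le> k (x, y)"
  shows "covers (Sub k) (Inl x) (Inr (x, y, 1))"
proof -
  have "\<not> (subdiv_le le (Inl x) z \<and> Inl x \<noteq> z \<and> subdiv_le le z (Inr (x, y, 1)) \<and> z \<noteq> Inr (x, y, 1))"
    if "z \<in> fst (Sub k)" for z
    using that
  proof (cases rule: subdiv_cases)
    case (Inl w)
    then show ?thesis using assms covD[of x y] antisym[of x w] by (auto simp: subdiv_le_def)
  next
    case (Inr a b i)
    then show ?thesis
      using assms covD[of x y] covD[of a b] antisym[of a b] trans[of b x a] by (auto simp: subdiv_le_def)
  qed
  then show ?thesis using assms covD[of x y] by (auto simp: covers_subdiv_iff subdiv_le_def refl)
qed

lemma covers_subdiv_last:
  assumes "cov x y" "1 \<le> k (x, y)"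
  shows "covers (Sub k) (Inr (x, y, k (x, y))) (Inl y)"
proof -
  have "\<not> (subdiv_le le (Inr (x, y, k (x, y))) z \<and> Inr (x, y, k (x, y)) \<noteq> z \<and>
      subdiv_le le z (Inl y) \<and> z \<noteq> Inl y)"
    if "z \<in> fst (Sub k)" for z
    using that
  proof (cases rule: subdiv_cases)
    case (Inl w)
    then show ?thesis using assms covD[of x y] antisym[of y w] by (auto simp: subdiv_le_def)
  next
    case (Inr a b i)
    then show ?thesis
      using assms covD[of x y] covD[of a b] antisym[of a b] trans[of b y a] by (auto simp: subdiv_le_def)
  qed
  then show ?thesis using assms covD[of x y] by (auto simp: covers_subdiv_iff subdiv_le_def refl)
qed

lemma incomp_subdiv_iff:
  "incomp (Sub k) p q \<longleftrightarrow> p \<in> fst (Sub k) \<and> q \<in> fst (Sub k) \<and> \<not> subdiv_le le p q \<and> \<not> subdiv_le le q p"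
  by (subst prod.collapse[symmetric]) (auto simp: subdiv_order simp del: prod.collapse)

lemma covers_subdiv_into_Inl:
  assumes "covers (Sub k) a (Inl y)"
  shows "\<exists>a'. cov a' y \<and> ((a = Inl a' \<and> k (a', y) = 0) \<or> (a = Inr (a', y, k (a', y)) \<and> 1 \<le> k (a', y)))"
  using covers_subdivD[OF assms]
proof (cases rule: subdiv_base_cases)
  case (Inl_Inl a')
  then show ?thesis using assms covers_subdiv_Inl_Inl by auto
qed auto

lemma covers_subdiv_from_Inl:
  assumes "covers (Sub k) (Inl x) d"
  shows "\<exists>d'. cov x d' \<and> ((d = Inl d' \<and> k (x, d') = 0) \<or> (d = Inr (x, d', 1) \<and> 1 \<le> k (x, d')))"
  using covers_subdivD[OF assms]
proof (cases rule: subdiv_base_cases)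
  case (Inl_Inl _ d')
  then show ?thesis using assms covers_subdiv_Inl_Inl by auto
qed auto

lemma is_N_subdivD:
  assumes "is_N (Sub k) a b c d"
  shows "\<exists>x y. b = Inl x \<and> c = Inl y \<and> k (x, y) = 0 \<and> (x, y) \<in> E {e. 1 \<le> k e}"
proof -
  have bc: "covers (Sub k) b c" and ac: "covers (Sub k) a c" and bd: "covers (Sub k) b d"
    and ad: "incomp (Sub k) a d"
    using assms unfolding is_N_def by blast+
  have "c \<noteq> d" using ac ad by (auto simp: covers_subdiv_iff incomp_subdiv_iff)
  have "a \<noteq> b" using bd ad by (auto simp: covers_subdiv_iff incomp_subdiv_iff)
  have base: "subdiv_base (A, le) k b c" "subdiv_base (A, le) k a c" "subdiv_base (A, le) k b d"
    using bc ac bd covers_subdivD by blast+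
  obtain x where b: "b = Inl x"
    using base(1,3) \<open>c \<noteq> d\<close> by (elim subdiv_base_cases) auto
  obtain y where c: "c = Inl y"
    using base(1,2) \<open>a \<noteq> b\<close> by (elim subdiv_base_cases) auto
  have xy: "cov x y" "k (x, y) = 0" using bc b c covers_subdiv_Inl_Inl by blast+
  obtain a' where a'y: "cov a' y"
    and a: "(a = Inl a' \<and> k (a', y) = 0) \<or> (a = Inr (a', y, k (a', y)) \<and> 1 \<le> k (a', y))"
    using covers_subdiv_into_Inl ac c by blast
  obtain d' where xd': "cov x d'"
    and d: "(d = Inl d' \<and> k (x, d') = 0) \<or> (d = Inr (x, d', 1) \<and> 1 \<le> k (x, d'))"
    using covers_subdiv_from_Inl bd b by blast
  have "a' \<noteq> x" using a \<open>a \<noteq> b\<close> b xy by auto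
  have "d' \<noteq> y" using d \<open>c \<noteq> d\<close> c xy by auto
  have "inc a' d'" if "k (a', y) = 0" "k (x, d') = 0"
    using a d ad that by (auto simp: incomp_subdiv_iff subdiv_le_def)
  then have "(x, y) \<in> E {e. 1 \<le> k e}"
    using N_edgesI[OF xy(1) a'y xd' \<open>a' \<noteq> x\<close> \<open>d' \<noteq> y\<close>] by force
  then show ?thesis using b c xy by blast
qed

lemma is_N_subdivI:
  assumes "(x, y) \<in> E {e. 1 \<le> k e}" "k (x, y) = 0"
  shows "\<exists>a d. is_N (Sub k) a (Inl x) (Inl y) d"
proof -
  obtain a' d' where xy: "cov x y" and a'y: "cov a' y" and xd': "cov x d'" and "a' \<noteq> x" "d' \<noteq> y"
    and alt: "inc a' d' \<or> 1 \<le> k (a', y) \<or> 1 \<le> k (x, d')"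
    using assms(1) unfolding N_edges_def by auto
  define a :: "'a subdiv_vertex" where "a = (if 1 \<le> k (a', y) then Inr (a', y, k (a', y)) else Inl a')"
  define d :: "'a subdiv_vertex" where "d = (if 1 \<le> k (x, d') then Inr (x, d', 1) else Inl d')"
  have "covers (Sub k) (Inl x) (Inl y)" using xy assms(2) covers_subdiv_Inl_Inl by blast
  moreover have "covers (Sub k) a (Inl y)"
    using covers_subdiv_last[OF a'y] covers_subdiv_Inl_Inl a'y by (simp add: a_def)
  moreover have "covers (Sub k) (Inl x) d"
    using covers_subdiv_first[OF xd'] covers_subdiv_Inl_Inl xd' by (simp add: d_def)
  moreover have "incomp (Sub k) a d"
  proof -
    have "a \<in> fst (Sub k)" "d \<in> fst (Sub k)"
      using calculation by (auto simp: covers_subdiv_iff)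
    moreover have "\<not> le d' a'" using N_legs_not_le[OF xy a'y xd' \<open>d' \<noteq> y\<close>] .
    moreover have "\<not> le y d'" using cov_betweenD[OF xd', of y] xy \<open>d' \<noteq> y\<close> covD by blast
    moreover have "\<not> le a' x" using cov_betweenD[OF a'y, of x] xy \<open>a' \<noteq> x\<close> covD by blast
    moreover have "\<not> le y x" using xy covD antisym by blast
    ultimately show ?thesis
      using alt \<open>a' \<noteq> x\<close> by (auto simp: incomp_subdiv_iff subdiv_le_def a_def d_def)
  qed
  ultimately show ?thesis unfolding is_N_def by blast
qed

lemma N_diag_subdiv: "N_diag (Sub k) = (\<lambda>(x, y). (Inl x, Inl y)) ` (E {e. 1 \<le> k e} - {e. 1 \<le> k e})"
proof
  show "N_diag (Sub k) \<subseteq> (\<lambda>(x, y). (Inl x, Inl y)) ` (E {e. 1 \<le> k e} - {e. 1 \<le> k e})"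
    unfolding N_diag_def using is_N_subdivD by fastforce
  show "(\<lambda>(x, y). (Inl x, Inl y)) ` (E {e. 1 \<le> k e} - {e. 1 \<le> k e}) \<subseteq> N_diag (Sub k)"
    unfolding N_diag_def using is_N_subdivI by fastforce
qed

lemma N_free_subdiv_iff: "N_free (Sub k) \<longleftrightarrow> E {e. 1 \<le> k e} \<subseteq> {e. 1 \<le> k e}"
  using N_diag_subdiv[of k] unfolding N_free_def N_diag_def by blast

end

section \<open>Order isomorphisms\<close>

definition order_iso :: "('a \<Rightarrow> 'b) \<Rightarrow> 'a poset \<Rightarrow> 'b poset \<Rightarrow> bool" where
  "order_iso f P Q \<longleftrightarrow> bij_betw f (fst P) (fst Q) \<and>
     (\<forall>x\<in>fst P. \<forall>y\<in>fst P. snd P x y \<longleftrightarrow> snd Q (f x) (f y))"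

lemma poset_iso_iff: "poset_iso P Q \<longleftrightarrow> (\<exists>f. order_iso f P Q)"
  by (simp add: poset_iso_def order_iso_def)

lemma order_isoI:
  assumes "\<forall>x\<in>A. h (g x) = x" "\<forall>y\<in>B. g (h y) = y" "g ` A \<subseteq> B" "h ` B \<subseteq> A"
    and "\<forall>x\<in>A. \<forall>y\<in>A. le x y \<longleftrightarrow> le' (g x) (g y)"
  shows "order_iso g (A, le) (B, le')"
  using bij_betw_byWitness[OF assms(1-4)] assms(5) by (simp add: order_iso_def)

lemma order_iso_inv:
  assumes "order_iso f P Q"
  shows "order_iso (inv_into (fst P) f) Q P"
proof -
  have f: "bij_betw f (fst P) (fst Q)" using assms by (simp add: order_iso_def)
  then have "bij_betw (inv_into (fst P) f) (fst Q) (fst P)" by (rule bij_betw_inv_into)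
  moreover have "snd Q x y \<longleftrightarrow> snd P (inv_into (fst P) f x) (inv_into (fst P) f y)"
    if "x \<in> fst Q" "y \<in> fst Q" for x y
    using assms that bij_betw_inv_into_right[OF f] bij_betwE[OF calculation]
    unfolding order_iso_def by metis
  ultimately show ?thesis by (simp add: order_iso_def)
qed

lemma order_iso_comp: "order_iso f P Q \<Longrightarrow> order_iso g Q R \<Longrightarrow> order_iso (g \<circ> f) P R"
  unfolding order_iso_def by (auto intro: bij_betw_trans dest: bij_betwE)

lemma poset_iso_sym: "poset_iso P Q \<Longrightarrow> poset_iso Q P"
  using order_iso_inv by (metis poset_iso_iff)

lemma poset_iso_trans: "poset_iso P Q \<Longrightarrow> poset_iso Q R \<Longrightarrow> poset_iso P R"
  using order_iso_comp by (metis poset_iso_iff)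

lemma poset_iso_card: "poset_iso P Q \<Longrightarrow> card (fst P) = card (fst Q)"
  unfolding poset_iso_def by (blast intro: bij_betw_same_card)

lemma poset_iso_finite: "poset_iso P Q \<Longrightarrow> finite (fst Q) \<Longrightarrow> finite (fst P)"
  unfolding poset_iso_def by (blast dest: bij_betw_finite)

lemma order_iso_covers:
  assumes "order_iso f (A, le) (B, le')" "x \<in> A" "y \<in> A"
  shows "covers (B, le') (f x) (f y) \<longleftrightarrow> covers (A, le) x y"
proof -
  have f: "bij_betw f A B" and le: "\<forall>x\<in>A. \<forall>y\<in>A. le x y \<longleftrightarrow> le' (f x) (f y)"
    using assms(1) by (simp_all add: order_iso_def)
  have B: "B = f ` A" using f by (simp add: bij_betw_def)
  have inj: "\<forall>x\<in>A. \<forall>y\<in>A. f x = f y \<longleftrightarrow> x = y" using f by (auto simp: bij_betw_def inj_on_def)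
  show ?thesis unfolding covers_iff B using assms(2,3) le inj by auto
qed

lemma order_iso_is_N:
  assumes "order_iso f (A, le) (B, le')" "is_N (A, le) a b c d"
  shows "is_N (B, le') (f a) (f b) (f c) (f d)"
proof -
  have mem: "a \<in> A" "b \<in> A" "c \<in> A" "d \<in> A"
    using assms(2) unfolding is_N_def by (auto simp: covers_iff)
  have "incomp (B, le') (f a) (f d)"
    using assms mem unfolding is_N_def order_iso_def by (auto dest: bij_betwE)
  then show ?thesis using assms mem order_iso_covers[OF assms(1)] unfolding is_N_def by blast
qed

lemma poset_iso_N_free:
  assumes "poset_iso P Q" "N_free Q"
  shows "N_free P"
proof -
  obtain A le B le' where P: "P = (A, le)" and Q: "Q = (B, le')" by fastforce
  obtain f where f: "order_iso f P Q" using assms(1) poset_iso_iff by blast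
  show ?thesis unfolding N_free_def
  proof
    assume "\<exists>a b c d. is_N P a b c d"
    then obtain a b c d where "is_N P a b c d" by blast
    then have "is_N Q (f a) (f b) (f c) (f d)" using f unfolding P Q by (rule order_iso_is_N[rotated])
    then show False using assms(2) unfolding N_free_def by blast
  qed
qed

lemma rtranclp_map:
  assumes "\<And>x y. R x y \<Longrightarrow> S\<^sup>*\<^sup>* (g x) (g y)" and "R\<^sup>*\<^sup>* x y"
  shows "S\<^sup>*\<^sup>* (g x) (g y)"
  using assms(2)
proof (induction rule: rtranclp_induct)
  case (step y z)
  then show ?case using assms(1) rtranclp_trans by metis
qed simp

lemma order_iso_rtranclp:
  assumes g: "bij_betw g C C'"
    and R: "\<And>x y. R x y \<Longrightarrow> x \<in> C \<and> y \<in> C" and R': "\<And>x y. R' x y \<Longrightarrow> x \<in> C' \<and> y \<in> C'"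
    and RR': "\<forall>x\<in>C. \<forall>y\<in>C. R x y \<longleftrightarrow> R' (g x) (g y)"
  shows "order_iso g (C, R\<^sup>*\<^sup>*) (C', R'\<^sup>*\<^sup>*)"
proof -
  let ?h = "inv_into C g"
  have h: "?h y \<in> C" "g (?h y) = y" if "y \<in> C'" for y
    using that bij_betwE[OF bij_betw_inv_into[OF g]] bij_betw_inv_into_right[OF g] by blast+
  have "R'\<^sup>*\<^sup>* (g x) (g y)" if "R x y" for x y
    using R[OF that] RR' that r_into_rtranclp[of R'] by blast
  then have "R'\<^sup>*\<^sup>* (g x) (g y)" if "R\<^sup>*\<^sup>* x y" for x y
    using rtranclp_map[OF _ that] by blast
  moreover have "R\<^sup>*\<^sup>* x y" if xy: "x \<in> C" "y \<in> C" and "R'\<^sup>*\<^sup>* (g x) (g y)" for x y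
  proof -
    have "R\<^sup>*\<^sup>* (?h x') (?h y')" if "R' x' y'" for x' y'
    proof -
      have "x' \<in> C'" "y' \<in> C'" using R'[OF that] by auto
      then show ?thesis using RR' h that r_into_rtranclp[of R] by simp
    qed
    then have "R\<^sup>*\<^sup>* (?h (g x)) (?h (g y))"
      using rtranclp_map[of R' R ?h, OF _ \<open>R'\<^sup>*\<^sup>* (g x) (g y)\<close>] by blast
    then show ?thesis using bij_betw_inv_into_left[OF g] xy by simp
  qed
  ultimately show ?thesis using g by (auto simp: order_iso_def)
qed

lemma poset_iso_add_dummy:
  assumes f: "order_iso f (A, le) (B, le')" and "b \<in> A" "c \<in> A" "u \<notin> A" "v \<notin> B"
  shows "poset_iso (add_dummy (A, le) b c u) (add_dummy (B, le') (f b) (f c) v)"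
proof -
  let ?g = "f(u := v)"
  have bij: "bij_betw f A B" and le: "\<forall>x\<in>A. \<forall>y\<in>A. le x y \<longleftrightarrow> le' (f x) (f y)"
    using f by (simp_all add: order_iso_def)
  have inj: "x \<in> A \<Longrightarrow> y \<in> A \<Longrightarrow> f x = f y \<longleftrightarrow> x = y" for x y
    using bij by (auto simp: bij_betw_def inj_on_def)
  have fA: "x \<in> A \<Longrightarrow> f x \<in> B" for x using bij by (auto dest: bij_betwE)
  have "bij_betw ?g (insert u A) (insert v B)"
    using bij assms(4,5) unfolding bij_betw_def inj_on_def by (auto simp: fun_upd_image)
  moreover have "\<forall>p\<in>insert u A. \<forall>q\<in>insert u A.
      ((p \<in> A \<and> q \<in> A \<and> le p q) \<or> (p = b \<and> q = u) \<or> (p = u \<and> q = c)) \<longleftrightarrow>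
      ((?g p \<in> B \<and> ?g q \<in> B \<and> le' (?g p) (?g q)) \<or> (?g p = f b \<and> ?g q = v) \<or> (?g p = v \<and> ?g q = f c))"
    using assms(2-5) le inj fA by auto
  ultimately show ?thesis
    unfolding poset_iso_iff add_dummy.simps using assms(2-5) fA
    by (intro exI order_iso_rtranclp) auto
qed

section \<open>Subdividing a subdivision\<close>

lemma rtranclp_eqI: "R \<le> S\<^sup>*\<^sup>* \<Longrightarrow> S \<le> R\<^sup>*\<^sup>* \<Longrightarrow> R\<^sup>*\<^sup>* = S\<^sup>*\<^sup>*"
  by (metis order_antisym rtranclp_idemp rtranclp_mono)

context finite_poset
begin

lemma subdiv_base_mono:
  assumes "\<And>e. 1 \<le> k e \<Longrightarrow> k' e = k e" and "subdiv_base (A, le) k p q"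
  shows "subdiv_base (A, le) k' p q"
  using assms(2) by (cases rule: subdiv_base_cases) (use assms(1) in auto)

lemma fst_subdiv_fun_upd:
  assumes "cov x y" "k (x, y) = 0"
  shows "fst (Sub (k((x, y) := 1))) = insert (Inr (x, y, 1)) (fst (Sub k))"
proof (rule set_eqI)
  fix p show "p \<in> fst (Sub (k((x, y) := 1))) \<longleftrightarrow> p \<in> insert (Inr (x, y, 1)) (fst (Sub k))"
    using assms by (cases p) (auto split: if_splits)
qed

lemma subdiv_base_fun_upd:
  assumes "k (x, y) = 0" "subdiv_base (A, le) (k((x, y) := 1)) p q"
  shows "subdiv_base (A, le) k p q \<or> (p = Inl x \<and> q = Inr (x, y, 1)) \<or> (p = Inr (x, y, 1) \<and> q = Inl y)"
  using assms(2) by (cases rule: subdiv_base_cases) (use assms(1) in \<open>auto split: if_splits\<close>)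

lemma add_dummy_subdiv:
  assumes "cov x y" "k (x, y) = 0"
  shows "add_dummy (Sub k) (Inl x) (Inl y) (Inr (x, y, 1)) = Sub (k((x, y) := 1))"
proof -
  let ?k' = "k((x, y) := 1)"
  let ?R = "\<lambda>p q. (p \<in> fst (Sub k) \<and> q \<in> fst (Sub k) \<and> (subdiv_base (A, le) k)\<^sup>*\<^sup>* p q) \<or>
      (p = Inl x \<and> q = Inr (x, y, 1)) \<or> (p = Inr (x, y, 1) \<and> q = Inl y)"
  have "subdiv_base (A, le) k \<le> subdiv_base (A, le) ?k'"
  proof (intro predicate2I)
    fix p q assume "subdiv_base (A, le) k p q"
    then show "subdiv_base (A, le) ?k' p q" by (rule subdiv_base_mono[rotated]) (use assms(2) in auto)
  qed
  then have "(subdiv_base (A, le) k)\<^sup>*\<^sup>* p q \<Longrightarrow> (subdiv_base (A, le) ?k')\<^sup>*\<^sup>* p q" for p q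
    using rtranclp_mono by blast
  moreover have "subdiv_base (A, le) ?k' (Inl x) (Inr (x, y, 1))"
    "subdiv_base (A, le) ?k' (Inr (x, y, 1)) (Inl y)"
    using assms(1) by auto
  ultimately have "?R \<le> (subdiv_base (A, le) ?k')\<^sup>*\<^sup>*"
    by (auto simp del: subdiv_base.simps)
  moreover have "subdiv_base (A, le) ?k' \<le> ?R\<^sup>*\<^sup>*"
  proof (intro predicate2I)
    fix p q assume "subdiv_base (A, le) ?k' p q"
    then have "subdiv_base (A, le) k p q \<or> (p = Inl x \<and> q = Inr (x, y, 1)) \<or> (p = Inr (x, y, 1) \<and> q = Inl y)"
      by (rule subdiv_base_fun_upd[where k = k, OF assms(2)])
    then have "?R p q"
      using subdiv_base_subdiv_le by (auto simp del: subdiv_base.simps)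
    then show "?R\<^sup>*\<^sup>* p q" by blast
  qed
  ultimately have order: "?R\<^sup>*\<^sup>* = (subdiv_base (A, le) ?k')\<^sup>*\<^sup>*" by (rule rtranclp_eqI)
  have "add_dummy (Sub k) (Inl x) (Inl y) (Inr (x, y, 1)) =
      add_dummy (fst (Sub k), snd (Sub k)) (Inl x) (Inl y) (Inr (x, y, 1))"
    by simp
  also have "\<dots> = (insert (Inr (x, y, 1)) (fst (Sub k)), ?R\<^sup>*\<^sup>*)"
    by (simp only: add_dummy.simps snd_subdiv)
  also have "\<dots> = Sub ?k'"
    unfolding fst_subdiv_fun_upd[where k = k, OF assms, symmetric] order by (rule subdiv_eq[symmetric])
  finally show ?thesis .
qed

end

definition flatten :: "'a subdiv_vertex subdiv_vertex \<Rightarrow> 'a subdiv_vertex" where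
  "flatten z = (case z of Inl p \<Rightarrow> p | Inr (p, q, i) \<Rightarrow> Inr (lower_end p, lower_end q, i))"

definition unflatten :: "('a \<times> 'a \<Rightarrow> nat) \<Rightarrow> 'a subdiv_vertex \<Rightarrow> 'a subdiv_vertex subdiv_vertex"
  where
  "unflatten k p = (case p of Inl x \<Rightarrow> Inl (Inl x)
     | Inr (x, y, i) \<Rightarrow> if 1 \<le> k (x, y) then Inl (Inr (x, y, i)) else Inr (Inl x, Inl y, i))"

text \<open>Subdividing only those edges of \<^term>\<open>subdiv P k\<close> that are edges of P carrying no dummy
  vertex yields again a subdivision of P; \<^const>\<open>flatten\<close> is the isomorphism.\<close>

locale double_subdiv = finite_poset +
  fixes k :: "'a \<times> 'a \<Rightarrow> nat"
    and k' :: "'a subdiv_vertex \<times> 'a subdiv_vertex \<Rightarrow> nat"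
  assumes support: "1 \<le> k' e \<Longrightarrow> \<exists>x y. e = (Inl x, Inl y) \<and> k (x, y) = 0"
begin

sublocale outer: finite_poset "fst (Sub k)" "snd (Sub k)"
  by (rule finite_poset_subdiv)

abbreviation combined :: "'a \<times> 'a \<Rightarrow> nat" where
  "combined \<equiv> \<lambda>(x, y). k (x, y) + k' (Inl x, Inl y)"

lemma k'_eq_0: "1 \<le> k (x, y) \<Longrightarrow> k' (Inl x, Inl y) = 0"
  using support[of "(Inl x, Inl y)"] by fastforce

lemma Inl_in_double: "Inl p \<in> fst (subdiv (Sub k) k') \<longleftrightarrow> p \<in> fst (Sub k)"
  using outer.Inl_in_subdiv by simp

lemma Inr_in_double: "Inr (p, q, i) \<in> fst (subdiv (Sub k) k') \<longleftrightarrow>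
    (\<exists>x y. p = Inl x \<and> q = Inl y \<and> cov x y \<and> k (x, y) = 0 \<and> 1 \<le> i \<and> i \<le> k' (p, q))"
  using outer.Inr_in_subdiv[of p q i k'] support[of "(p, q)"] covers_subdiv_Inl_Inl by auto

lemma double_cases [consumes 1, case_names Inl Inr]:
  assumes "z \<in> fst (subdiv (Sub k) k')"
  obtains p where "z = Inl p" "p \<in> fst (Sub k)"
  | x y i where "z = Inr (Inl x, Inl y, i)" "cov x y" "k (x, y) = 0" "1 \<le> i" "i \<le> k' (Inl x, Inl y)"
  using assms Inl_in_double Inr_in_double by (cases z) auto

lemma double_order:
  assumes "z \<in> fst (subdiv (Sub k) k')" "w \<in> fst (subdiv (Sub k) k')"
  shows "snd (subdiv (Sub k) k') z w \<longleftrightarrow> subdiv_le (snd (Sub k)) z w"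
  using outer.subdiv_order[of z k' w] assms by simp

lemma flatten_in:
  assumes "z \<in> fst (subdiv (Sub k) k')"
  shows "flatten z \<in> fst (Sub combined)"
  using assms
proof (cases rule: double_cases)
  case (Inl p)
  then show ?thesis by (cases rule: subdiv_cases[OF Inl(2)]) (auto simp: flatten_def)
qed (simp add: flatten_def)

lemma unflatten_in: "p \<in> fst (Sub combined) \<Longrightarrow> unflatten k p \<in> fst (subdiv (Sub k) k')"
  by (cases rule: subdiv_cases) (auto simp: unflatten_def Inl_in_double Inr_in_double k'_eq_0)

lemma unflatten_flatten:
  assumes "z \<in> fst (subdiv (Sub k) k')"
  shows "unflatten k (flatten z) = z"
  using assms
proof (cases rule: double_cases)
  case (Inl p)
  then show ?thesis by (cases rule: subdiv_cases[OF Inl(2)]) (auto simp: flatten_def unflatten_def)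
qed (simp add: flatten_def unflatten_def)

lemma flatten_unflatten: "flatten (unflatten k p) = p"
  by (auto simp: flatten_def unflatten_def split: sum.split)

lemma not_same_edge_le_Inr:
  assumes "p \<in> fst (Sub k)" "k (x, y) = 0"
  shows "\<not> same_edge_le p (Inr (x, y, i))" "\<not> same_edge_le (Inr (x, y, i)) p"
  using assms by (cases rule: subdiv_cases; auto)+

lemma flatten_order:
  assumes z: "z \<in> fst (subdiv (Sub k) k')" and w: "w \<in> fst (subdiv (Sub k) k')"
  shows "subdiv_le (snd (Sub k)) z w \<longleftrightarrow> subdiv_le le (flatten z) (flatten w)"
  using z
proof (cases rule: double_cases)
  case z': (Inl p)
  from w show ?thesis
  proof (cases rule: double_cases)
    case (Inl q)
    then show ?thesis
      using z' unfolding subdiv_le_def[of "snd (Sub k)"] by (simp add: flatten_def subdiv_order)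
  next
    case (Inr x y i)
    then show ?thesis
      using z' not_same_edge_le_Inr covD unfolding subdiv_le_def[of "snd (Sub k)"]
      by (simp add: flatten_def subdiv_order subdiv_le_def[of le])
  qed
next
  case z': (Inr x y i)
  from w show ?thesis
  proof (cases rule: double_cases)
    case (Inl q)
    then show ?thesis
      using z' not_same_edge_le_Inr covD unfolding subdiv_le_def[of "snd (Sub k)"]
      by (simp add: flatten_def subdiv_order subdiv_le_def[of le])
  next
    case (Inr x' y' j)
    then show ?thesis
      using z' covD unfolding subdiv_le_def[of "snd (Sub k)"]
      by (simp add: flatten_def subdiv_order subdiv_le_def[of le])
  qed
qed

theorem double_subdiv_iso: "poset_iso (subdiv (Sub k) k') (Sub combined)"
proof -
  have "order_iso flatten (fst (subdiv (Sub k) k'), snd (subdiv (Sub k) k'))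
      (fst (Sub combined), snd (Sub combined))"
  proof (rule order_isoI[where h = "unflatten k"])
    show "\<forall>z\<in>fst (subdiv (Sub k) k'). \<forall>w\<in>fst (subdiv (Sub k) k').
        snd (subdiv (Sub k) k') z w \<longleftrightarrow> snd (Sub combined) (flatten z) (flatten w)"
      using double_order flatten_order subdiv_order flatten_in by blast
  qed (use flatten_in unflatten_in unflatten_flatten flatten_unflatten in auto)
  then show ?thesis unfolding poset_iso_iff prod.collapse by blast
qed

end

text \<open>Stated with \<^term>\<open>Suc 0\<close>: the simplifier turns \<^term>\<open>1 :: nat\<close> into \<^term>\<open>Suc 0\<close> before a rule
  about \<^term>\<open>1 :: nat\<close> could match.\<close>

lemma Suc_0_le_of_bool_iff [simp]: "Suc 0 \<le> of_bool P \<longleftrightarrow> P"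
  by (cases P) auto

context finite_poset
begin

abbreviation Sub1 :: "('a \<times> 'a) set \<Rightarrow> 'a subdiv_vertex poset" where
  "Sub1 K \<equiv> Sub (\<lambda>e. of_bool (e \<in> K))"

lemma SN_eq: "SN (A, le) = Sub1 (N_diag (A, le))"
  by (simp add: SN_def of_bool_def)

lemma add_dummy_Sub1:
  assumes "cov x y" "(x, y) \<notin> K"
  shows "add_dummy (Sub1 K) (Inl x) (Inl y) (Inr (x, y, 1)) = Sub1 (insert (x, y) K)"
proof -
  have "add_dummy (Sub1 K) (Inl x) (Inl y) (Inr (x, y, 1)) = Sub ((\<lambda>e. of_bool (e \<in> K))((x, y) := 1))"
    by (rule add_dummy_subdiv) (use assms in simp_all)
  also have "(\<lambda>e. of_bool (e \<in> K))((x, y) := 1) = (\<lambda>e. of_bool (e \<in> insert (x, y) K))"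
    by (auto simp: fun_eq_iff)
  finally show ?thesis .
qed

lemma SN_SN_iso: "poset_iso (SN (SN (A, le))) (Sub1 N_closure)"
proof -
  let ?K = "N_diag (A, le)"
  let ?D = "(\<lambda>(x, y). (Inl x, Inl y)) ` (E ?K - ?K)"
  have SN_SN: "SN (SN (A, le)) = subdiv (Sub1 ?K) (\<lambda>e. of_bool (e \<in> ?D))"
    using N_diag_subdiv[of "\<lambda>e. of_bool (e \<in> ?K)"] by (simp add: SN_eq SN_def of_bool_def)
  have "1 \<le> (of_bool (e \<in> ?D) :: nat) \<Longrightarrow>
      \<exists>x y. e = (Inl x, Inl y) \<and> (of_bool ((x, y) \<in> ?K) :: nat) = 0" for e
    by (cases "e \<in> ?D") auto
  then interpret double_subdiv A le "\<lambda>e. of_bool (e \<in> ?K)" "\<lambda>e. of_bool (e \<in> ?D)"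
    by unfold_locales simp
  note iso = double_subdiv_iso
  have merge: "(\<lambda>(x, y). of_bool ((x, y) \<in> ?K) + of_bool ((Inl x, Inl y) \<in> ?D)) =
      (\<lambda>e. of_bool (e \<in> N_closure) :: nat)"
    using N_diag_subset_N_closure by (auto simp: fun_eq_iff)
  show ?thesis using iso[unfolded merge] unfolding SN_SN .
qed

lemma card_Sub1:
  assumes "K \<subseteq> {(x, y). cov x y}"
  shows "card (fst (Sub1 K)) = card A + card K"
proof -
  have carrier: "fst (Sub1 K) = Inl ` A \<union> (\<lambda>(x, y). Inr (x, y, 1)) ` K"
    using assms by (auto simp: subdiv.simps)
  have "finite K" using assms covD finite_subset[of K "A \<times> A"] finite_carrier by blast
  have "card (Inl ` A \<union> (\<lambda>(x, y). Inr (x, y, 1)) ` K :: 'a subdiv_vertex set) =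
      card (Inl ` A :: 'a subdiv_vertex set) + card ((\<lambda>(x, y). Inr (x, y, 1)) ` K :: 'a subdiv_vertex set)"
    by (rule card_Un_disjoint) (use \<open>finite K\<close> finite_carrier in auto)
  also have "card (Inl ` A :: 'a subdiv_vertex set) = card A"
    by (rule card_image) simp
  also have "card ((\<lambda>(x, y). Inr (x, y, 1)) ` K :: 'a subdiv_vertex set) = card K"
    by (rule card_image) (auto simp: inj_on_def)
  finally show ?thesis unfolding carrier .
qed

lemma iso_Sub1_empty: "poset_iso (A, le) (Sub1 {})"
proof -
  have "order_iso Inl (A, le) (fst (Sub1 {}), snd (Sub1 {}))"
  proof (rule order_isoI[where h = projl])
    show "Inl ` A \<subseteq> fst (Sub1 {})" "projl ` fst (Sub1 {}) \<subseteq> A"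
      "\<forall>p\<in>fst (Sub1 {}). Inl (projl p) = p"
      by (auto simp: subdiv.simps)
  qed (auto simp: subdiv_order subdiv_le_def)
  then show ?thesis unfolding poset_iso_iff by auto
qed

end

section \<open>Runs of the algorithm\<close>

lemma complete_run_Cons:
  assumes "alg_step Q Q'" "complete_run Q' Ps"
  shows "complete_run Q (Q # Ps)"
proof -
  have "Ps ! 0 = Q'" using assms(2) by (metis complete_run_def hd_conv_nth)
  then have "alg_step ((Q # Ps) ! i) ((Q # Ps) ! Suc i)" if "Suc i < length (Q # Ps)" for i
    using assms that by (cases i) (auto simp: complete_run_def)
  then show ?thesis using assms(2) by (auto simp: complete_run_def)
qed

context finite_poset
begin

lemma alg_step_preserves_Sub1:
  assumes iso: "poset_iso Q (Sub1 K)" and K: "K \<subseteq> N_closure" and step: "alg_step Q Q'"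
  shows "\<exists>e. e \<notin> K \<and> insert e K \<subseteq> N_closure \<and> poset_iso Q' (Sub1 (insert e K))"
proof -
  obtain a b c d u where N: "is_N Q a b c d" and u: "u \<notin> fst Q" and Q': "Q' = add_dummy Q b c u"
    using step unfolding alg_step_def by blast
  obtain B le' where Q: "Q = (B, le')" by fastforce
  obtain f where f: "order_iso f Q (Sub1 K)" using iso poset_iso_iff by blast
  then have f': "order_iso f (B, le') (fst (Sub1 K), snd (Sub1 K))" by (simp add: Q)
  have "is_N (Sub1 K) (f a) (f b) (f c) (f d)"
    using order_iso_is_N[OF f'] N Q by simp
  from is_N_subdivD[OF this]
  obtain x y where fb: "f b = Inl x" and fc: "f c = Inl y" and "(x, y) \<notin> K" "(x, y) \<in> E K"
    by auto
  have bc: "b \<in> B" "c \<in> B" using N Q unfolding is_N_def by (auto simp: covers_iff)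
  have "Inr (x, y, 1) \<notin> fst (Sub1 K)" using \<open>(x, y) \<notin> K\<close> by simp
  moreover have "u \<notin> B" using u Q by simp
  ultimately have "poset_iso Q' (add_dummy (Sub1 K) (Inl x) (Inl y) (Inr (x, y, 1)))"
    using poset_iso_add_dummy[OF f' bc] by (simp only: Q' Q fb fc prod.collapse)
  also have "add_dummy (Sub1 K) (Inl x) (Inl y) (Inr (x, y, 1)) = Sub1 (insert (x, y) K)"
    using add_dummy_Sub1 N_edges_subset_covers \<open>(x, y) \<in> E K\<close> \<open>(x, y) \<notin> K\<close> by blast
  finally have "poset_iso Q' (Sub1 (insert (x, y) K))" .
  moreover have "insert (x, y) K \<subseteq> N_closure"
    using \<open>(x, y) \<in> E K\<close> N_edges_subset_N_closure[OF K] K by blast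
  ultimately show ?thesis using \<open>(x, y) \<notin> K\<close> by blast
qed

lemma run_iso_Sub1:
  assumes "f 0 = (A, le)" "\<forall>i<m. alg_step (f i) (f (Suc i))"
  shows "\<exists>K \<subseteq> N_closure. card K = m \<and> poset_iso (f m) (Sub1 K)"
  using assms(2)
proof (induction m)
  case 0
  then show ?case using iso_Sub1_empty assms(1) by (intro exI[of _ "{}"]) simp
next
  case (Suc m)
  then obtain K where K: "K \<subseteq> N_closure" "card K = m" "poset_iso (f m) (Sub1 K)" by auto
  moreover have "alg_step (f m) (f (Suc m))" using Suc.prems by simp
  ultimately obtain e where "e \<notin> K" "insert e K \<subseteq> N_closure"
    and "poset_iso (f (Suc m)) (Sub1 (insert e K))"
    using alg_step_preserves_Sub1 by blast
  moreover have "finite K" using K(1) finite_N_closure finite_subset by blast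
  ultimately show ?case using K(2) by (intro exI[of _ "insert e K"]) simp
qed

theorem no_infinite_run: "\<nexists>f. f 0 = (A, le) \<and> (\<forall>m. alg_step (f m) (f (Suc m)))"
proof
  assume "\<exists>f. f 0 = (A, le) \<and> (\<forall>m. alg_step (f m) (f (Suc m)))"
  then obtain f where "f 0 = (A, le)" "\<forall>m. alg_step (f m) (f (Suc m))" by blast
  then obtain K where "K \<subseteq> N_closure" "card K = Suc (card N_closure)"
    using run_iso_Sub1[of f "Suc (card N_closure)"] by blast
  then show False using card_mono[OF finite_N_closure, of K] by simp
qed

lemma exists_complete_run:
  fixes Q :: "'b poset"
  assumes "infinite (UNIV :: 'b set)" "K \<subseteq> N_closure" "poset_iso Q (Sub1 K)"
  shows "\<exists>Ps. complete_run Q Ps"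
  using assms(2,3)
proof (induction "card N_closure - card K" arbitrary: Q K rule: less_induct)
  case less
  show ?case
  proof (cases "N_free Q")
    case True
    then have "complete_run Q [Q]" by (simp add: complete_run_def)
    then show ?thesis by blast
  next
    case False
    then obtain a b c d where "is_N Q a b c d" by (auto simp: N_free_def)
    moreover have "finite (fst Q)"
      using poset_iso_finite[OF less.prems(2)] finite_subdiv_carrier by blast
    then obtain u where "u \<notin> fst Q" using ex_new_if_finite[OF assms(1)] by blast
    ultimately have step: "alg_step Q (add_dummy Q b c u)" unfolding alg_step_def by blast
    then obtain e where e: "e \<notin> K" "insert e K \<subseteq> N_closure"
      and iso: "poset_iso (add_dummy Q b c u) (Sub1 (insert e K))"
      using alg_step_preserves_Sub1 less.prems by blast
    have "card (insert e K) \<le> card N_closure" using card_mono[OF finite_N_closure e(2)] .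
    moreover have "finite K" using less.prems(1) finite_N_closure finite_subset by blast
    ultimately have "card N_closure - card (insert e K) < card N_closure - card K"
      using e(1) by simp
    then obtain Ps where "complete_run (add_dummy Q b c u) Ps"
      using less.hyps[OF _ e(2) iso] by blast
    then show ?thesis using complete_run_Cons[OF step] by blast
  qed
qed

theorem complete_run_last_length:
  assumes run: "complete_run (A, le) Ps"
  shows "poset_iso (last Ps) (Sub1 N_closure) \<and> length Ps = Suc (card N_closure)"
proof -
  have "Ps \<noteq> []" and "Ps ! 0 = (A, le)"
    using run by (auto simp: complete_run_def hd_conv_nth)
  moreover have "\<forall>i<length Ps - 1. alg_step (Ps ! i) (Ps ! Suc i)"
    using run by (simp add: complete_run_def)
  ultimately obtain K where K: "K \<subseteq> N_closure" "card K = length Ps - 1"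
    and iso: "poset_iso (last Ps) (Sub1 K)"
    using run_iso_Sub1[of "(!) Ps" "length Ps - 1"] by (auto simp: last_conv_nth)
  have "N_free (last Ps)" using run by (simp add: complete_run_def)
  then have "N_free (Sub1 K)" using poset_iso_N_free[OF poset_iso_sym[OF iso]] by blast
  then have "N_closure \<subseteq> K" using N_closure_least N_free_subdiv_iff by simp
  then have "K = N_closure" using K(1) by blast
  then show ?thesis using iso K(2) \<open>Ps \<noteq> []\<close> by simp
qed

lemma N_free_Sub1_N_closure: "N_free (Sub1 N_closure)"
  using N_free_subdiv_iff N_edges_N_closure by simp

lemma N_free_subdiv_least:
  assumes "N_free (Sub k)"
  shows "of_bool ((x, y) \<in> N_closure) \<le> k (x, y)"
proof -
  have "N_closure \<subseteq> {e. 1 \<le> k e}"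
    using N_closure_least assms N_free_subdiv_iff by blast
  then show ?thesis by (cases "(x, y) \<in> N_closure") auto
qed

end

lemma finite_posetI: "is_poset (A, le) \<Longrightarrow> finite A \<Longrightarrow> finite_poset A le"
  unfolding finite_poset_def is_poset.simps by blast

theorem theorem2:
  fixes P :: "'a poset"
  assumes "infinite (UNIV :: 'a set)"
    and "finite (fst P)"
    and "is_poset P"
  shows "\<not> (\<exists>f :: nat \<Rightarrow> 'a poset. f 0 = P \<and> (\<forall>m. alg_step (f m) (f (Suc m)))) \<and>
         (\<exists>Ps. complete_run P Ps) \<and>
         (\<forall>Ps. complete_run P Ps \<longrightarrow>
           poset_iso (last Ps) (SN (SN P)) \<and>
           length Ps = Suc (card (fst (SN (SN P))) - card (fst P))) \<and>
         (\<exists>k0. poset_iso (SN (SN P)) (subdiv P k0) \<and> N_free (subdiv P k0) \<and>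
           (\<forall>k. N_free (subdiv P k) \<longrightarrow> (\<forall>x y. covers P x y \<longrightarrow> k0 (x, y) \<le> k (x, y))))"
proof -
  obtain A le where P: "P = (A, le)" by fastforce
  interpret finite_poset A le
    using finite_posetI assms(2,3)[unfolded P fst_conv] by blast
  have SN_SN: "poset_iso (SN (SN (A, le))) (Sub1 N_closure)" by (rule SN_SN_iso)
  have card: "card (fst (SN (SN (A, le)))) - card A = card N_closure"
    using poset_iso_card[OF SN_SN] card_Sub1[OF N_edges_subset_covers] by simp
  have "poset_iso (last Ps) (SN (SN (A, le))) \<and>
      length Ps = Suc (card (fst (SN (SN (A, le)))) - card A)" if "complete_run (A, le) Ps" for Ps
    using complete_run_last_length[OF that] poset_iso_trans[OF _ poset_iso_sym[OF SN_SN]]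
    unfolding card by blast
  moreover have "\<exists>Ps. complete_run (A, le) Ps"
    using exists_complete_run[OF assms(1) _ iso_Sub1_empty] by simp
  ultimately show ?thesis
    using no_infinite_run SN_SN N_free_Sub1_N_closure N_free_subdiv_least unfolding P fst_conv
    by blast
qed

end
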